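(* Let $(X,d)$ be a compact metric space and $\emptyset\neq F\subseteq X$ with a representation $(\tilde F_k)$ w.r.t. which $F$ is explicitly closed. Let $G,H:\mathbb{R}_+\to\mathbb{R}_+$ satisfy properties (G) and (H). Assume that the sequence $(x_n)$ in $X$ is $(G,H)$-Fej\'er monotone with respect to $F$ and has approximate $F$-points. Then $(x_n)$ converges to a point $x\in F$.
   Context: A representation of $F$ is a family $(\tilde F_k)_{k\in\mathbb{N}}$ of subsets of $X$ with $F=\bigcap_k\tilde F_k$; $AF_k:=\bigcap_{l\le k}\tilde F_l$. $(x_n)$ has approximate $F$-points if for all $k$ there is $N$ with $x_N\in AF_k$. $F$ is explicitly closed if for every $p\in X$: if $AF_M\cap\overline B(p,1/(N+1))\ne\emptyset$ for all $N,M\in\mathbb{N}$, then $p\in F$. Property (G): $a_n\to0$ implies $G(a_n)\to0$ for all sequences $(a_n)$ in $\mathbb{R}_+$; property (H): $H(a_n)\to0$ implies $a_n\to0$ for all sequences $(a_n)$ in $\mathbb{R}_+$. $(x_n)$ is $(G,H)$-Fej\'er monotone w.r.t. $F$ if $H(d(x_{n+m},p))\le G(d(x_n,p))$ for all $n,m\in\mathbb{N}$, $p\in F$. *)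

theory Defs
  imports "HOL-Analysis.Analysis"
begin

definition is_representation :: "'a set \<Rightarrow> 'a set \<Rightarrow> (nat \<Rightarrow> 'a set) \<Rightarrow> bool" where
  "is_representation X F Ft \<longleftrightarrow> (\<forall>k. Ft k \<subseteq> X) \<and> F = (\<Inter>k. Ft k)"

definition AF :: "(nat \<Rightarrow> 'a set) \<Rightarrow> nat \<Rightarrow> 'a set" where
  "AF Ft k = (\<Inter>l\<in>{..k}. Ft l)"

definition has_approx_F_points :: "(nat \<Rightarrow> 'a set) \<Rightarrow> (nat \<Rightarrow> 'a) \<Rightarrow> bool" where
  "has_approx_F_points Ft x \<longleftrightarrow> (\<forall>k. \<exists>N. x N \<in> AF Ft k)"

definition explicitly_closed :: "'a::metric_space set \<Rightarrow> 'a set \<Rightarrow> (nat \<Rightarrow> 'a set) \<Rightarrow> bool" where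
  "explicitly_closed X F Ft \<longleftrightarrow>
     (\<forall>p\<in>X. (\<forall>N M::nat. AF Ft M \<inter> (cball p (1 / (real N + 1)) \<inter> X) \<noteq> {}) \<longrightarrow> p \<in> F)"

definition property_G :: "(real \<Rightarrow> real) \<Rightarrow> bool" where
  "property_G G \<longleftrightarrow> (\<forall>a::nat \<Rightarrow> real. (\<forall>n. a n \<ge> 0) \<longrightarrow> a \<longlonglongrightarrow> 0 \<longrightarrow> (\<lambda>n. G (a n)) \<longlonglongrightarrow> 0)"

definition property_H :: "(real \<Rightarrow> real) \<Rightarrow> bool" where
  "property_H H \<longleftrightarrow> (\<forall>a::nat \<Rightarrow> real. (\<forall>n. a n \<ge> 0) \<longrightarrow> (\<lambda>n. H (a n)) \<longlonglongrightarrow> 0 \<longrightarrow> a \<longlonglongrightarrow> 0)"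

definition GH_fejer_monotone ::
  "(real \<Rightarrow> real) \<Rightarrow> (real \<Rightarrow> real) \<Rightarrow> 'a::metric_space set \<Rightarrow> (nat \<Rightarrow> 'a) \<Rightarrow> bool" where
  "GH_fejer_monotone G H F x \<longleftrightarrow>
     (\<forall>n m. \<forall>p\<in>F. H (dist (x (n + m)) p) \<le> G (dist (x n) p))"

end

theory Submission
  imports Defs
begin

text \<open>By compactness, the terms x (N k) \<in> AF k have a convergent subsequence; explicit
  closedness puts its limit p into F. Fej\'er monotonicity with respect to p then bounds
  H (d(x n, p)) for all large n by G of a distance along the subsequence, which tends to 0
  by property (G); property (H) turns H (d(x n, p)) \<longrightarrow> 0 into x n \<longrightarrow> p.\<close>

lemma AF_antimono: "M \<le> k \<Longrightarrow> AF Ft k \<subseteq> AF Ft M"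
  by (auto simp: AF_def)

lemma explicitly_closed_limit_in_F:
  assumes "explicitly_closed X F Ft" and "p \<in> X"
    and "\<And>j. y j \<in> X" and "\<And>j. y j \<in> AF Ft (s j)"
    and "filterlim s at_top sequentially" and "y \<longlonglongrightarrow> p"
  shows "p \<in> F"
proof -
  have "AF Ft M \<inter> (cball p (1 / (real n + 1)) \<inter> X) \<noteq> {}" for n M
  proof -
    have "eventually (\<lambda>j. dist (y j) p < 1 / (real n + 1)) sequentially"
      using assms(6) by (rule tendstoD) simp
    moreover have "eventually (\<lambda>j. s j \<ge> M) sequentially"
      using assms(5) by (simp add: filterlim_at_top)
    ultimately have "eventually (\<lambda>j. dist (y j) p < 1 / (real n + 1) \<and> s j \<ge> M) sequentially"
      by (rule eventually_conj)
    then obtain j where j: "dist (y j) p < 1 / (real n + 1)" "s j \<ge> M"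
      using eventually_happens[of _ sequentially] by auto
    have "y j \<in> AF Ft M"
      using AF_antimono[OF j(2)] assms(4)[of j] by (rule subsetD)
    moreover have "y j \<in> cball p (1 / (real n + 1))"
      using j(1) by (simp add: dist_commute)
    ultimately show ?thesis using assms(3) by blast
  qed
  then show ?thesis
    using assms(1,2) unfolding explicitly_closed_def by blast
qed

text \<open>The indices s j need not tend to infinity: a single index with small G-value already
  controls the whole tail of the sequence.\<close>

lemma GH_fejer_monotone_tendsto:
  assumes fejer: "GH_fejer_monotone G H F x" and "p \<in> F"
    and "property_G G" and "property_H H" and H_nonneg: "\<And>t. t \<ge> 0 \<Longrightarrow> H t \<ge> 0"
    and lim: "(\<lambda>j. x (s j)) \<longlonglongrightarrow> p"
  shows "x \<longlonglongrightarrow> p"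
proof -
  define a where "a n = dist (x n) p" for n
  have a_nonneg: "a n \<ge> 0" for n by (simp add: a_def)
  have "(\<lambda>j. a (s j)) \<longlonglongrightarrow> 0"
    using tendsto_dist_iff[THEN iffD1, OF lim] by (simp add: a_def)
  then have G_lim: "(\<lambda>j. G (a (s j))) \<longlonglongrightarrow> 0"
    using \<open>property_G G\<close> a_nonneg unfolding property_G_def by simp
  have "(\<lambda>n. H (a n)) \<longlonglongrightarrow> 0"
  proof (rule LIMSEQ_I)
    fix e :: real assume "e > 0"
    then obtain j where j: "\<bar>G (a (s j))\<bar> < e"
      using LIMSEQ_D[OF G_lim \<open>e > 0\<close>] by auto
    have "\<bar>H (a n)\<bar> < e" if "n \<ge> s j" for n
    proof -
      have "H (a (s j + (n - s j))) \<le> G (a (s j))"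
        using fejer \<open>p \<in> F\<close> unfolding GH_fejer_monotone_def a_def by blast
      then show ?thesis using that j H_nonneg[OF a_nonneg, of n] by simp
    qed
    then show "\<exists>n0. \<forall>n\<ge>n0. norm (H (a n) - 0) < e" by auto
  qed
  then have "a \<longlonglongrightarrow> 0"
    using \<open>property_H H\<close> a_nonneg unfolding property_H_def by simp
  then show ?thesis
    unfolding a_def by (rule tendsto_dist_iff[THEN iffD2])
qed

theorem proposition4p3:
  fixes X F :: "'a::metric_space set" and Ft :: "nat \<Rightarrow> 'a set"
    and G H :: "real \<Rightarrow> real" and x :: "nat \<Rightarrow> 'a"
  assumes "compact X"
    and "F \<noteq> {}" and "F \<subseteq> X"
    and "is_representation X F Ft"
    and "explicitly_closed X F Ft"
    and "\<And>t. t \<ge> 0 \<Longrightarrow> G t \<ge> 0"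
    and "\<And>t. t \<ge> 0 \<Longrightarrow> H t \<ge> 0"
    and "property_G G" and "property_H H"
    and "\<And>n. x n \<in> X"
    and "GH_fejer_monotone G H F x"
    and "has_approx_F_points Ft x"
  shows "\<exists>p\<in>F. x \<longlonglongrightarrow> p"
proof -
  obtain N where N: "\<And>k. x (N k) \<in> AF Ft k"
    using assms(12) unfolding has_approx_F_points_def by metis
  obtain p r where "p \<in> X" and r: "strict_mono r" and "((x \<circ> N) \<circ> r) \<longlonglongrightarrow> p"
    using compact_imp_seq_compact[OF assms(1)] assms(10)
    unfolding seq_compact_def by (metis comp_apply)
  then have lim: "(\<lambda>j. x (N (r j))) \<longlonglongrightarrow> p" by (simp add: o_def)
  have "p \<in> F"
    using explicitly_closed_limit_in_F[OF assms(5) \<open>p \<in> X\<close> assms(10) N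
        filterlim_subseq[OF r] lim] .
  moreover have "x \<longlonglongrightarrow> p"
    using GH_fejer_monotone_tendsto[OF assms(11) \<open>p \<in> F\<close> assms(8,9,7) lim] .
  ultimately show ?thesis by blast
qed

end
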